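(* Let $K$ be a field, $c\in K\setminus\{0\}$, $n\ge1$, and let $f$ be a $c$-frieze of order $n$ over $K$. Then there exist $s,t\in K$ such that $f(2i,2i+n)=s$ and $f(2i+1,2i+n+1)=t$ for all $i\in\mathbb{Z}$ (so row $n+1$ of $f$ alternates $\dots,s,t,s,t,\dots$), and moreover $st=(-c)^{n+1}$.
   Context: The $c$-continuant polynomials $P_k=P_k^c$ ($k\ge-1$) are defined by $P_{-1}=0$, $P_0=1$, and for $k\ge1$, $P_k(x_1,\dots,x_k)=x_kP_{k-1}(x_1,\dots,x_{k-1})+cP_{k-2}(x_1,\dots,x_{k-2})$. A family $(x_i)_{i\in\mathbb{Z}}$ in $K$ is $n$-admissible if $P_{n+2}(x_i,\dots,x_{i+n+1})=0$ for all $i$. Let $\mathbb{B}_n=\{(i,j)\in\mathbb{Z}^2:-2\le j-i\le n+1\}$. A $c$-frieze of order $n$ is a function $f:\mathbb{B}_n\to K$ for which there is an $n$-admissible family $(x_i)$ with $f(i,j)=P_{j-i+1}(x_i,\dots,x_j)$ for all $(i,j)\in\mathbb{B}_n$. Row $k$ ($-1\le k\le n+2$) of $f$ consists of the values $f(i,i+k-1)$, $i\in\mathbb{Z}$. *)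

theory Defs
  imports Main
begin

(* Continuant evaluated on the REVERSED argument list:
   contr c [x_k, x_(k-1), ..., x_1] = P_k(x_1,...,x_k). *)
fun contr :: "'a::field \<Rightarrow> 'a list \<Rightarrow> 'a" where
  "contr c [] = 1"
| "contr c [a] = a"
| "contr c (a # b # xs) = a * contr c (b # xs) + c * contr c xs"

definition cont :: "'a::field \<Rightarrow> 'a list \<Rightarrow> 'a" where
  "cont c xs = contr c (rev xs)"

(* P_{j-i+1}(x_i,...,x_j), for j - i + 1 \<ge> -1 (P_{-1} = 0) *)
definition contw :: "'a::field \<Rightarrow> (int \<Rightarrow> 'a) \<Rightarrow> int \<Rightarrow> int \<Rightarrow> 'a" where
  "contw c x i j = (if j - i + 1 = -1 then 0 else cont c (map x [i..j]))"

definition admissible :: "'a::field \<Rightarrow> nat \<Rightarrow> (int \<Rightarrow> 'a) \<Rightarrow> bool" where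
  "admissible c n x \<longleftrightarrow> (\<forall>i::int. cont c (map x [i..i + int n + 1]) = 0)"

definition strip :: "nat \<Rightarrow> (int \<times> int) set" where
  "strip n = {(i, j). -2 \<le> j - i \<and> j - i \<le> int n + 1}"

(* f is a c-frieze of order n; f is a total function on int \<times> int, only its
   values on strip n matter *)
definition is_frieze :: "'a::field \<Rightarrow> nat \<Rightarrow> (int \<times> int \<Rightarrow> 'a) \<Rightarrow> bool" where
  "is_frieze c n f \<longleftrightarrow> (\<exists>x. admissible c n x \<and>
      (\<forall>(i, j) \<in> strip n. f (i, j) = contw c x i j))"

end

theory Submission
  imports Defs
begin

text \<open>The continuants satisfy the determinant identity
  \<open>P(x0..x(n+1)) P(x1..xn) - P(x1..x(n+1)) P(x0..xn) = -(-c)^(n+1)\<close>.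
  For an admissible family the first product vanishes, so consecutive entries of row \<open>n+1\<close>
  multiply to \<open>(-c)^(n+1) \<noteq> 0\<close>; hence each entry equals the one two places further on.\<close>

lemma cont_snoc_snoc: "cont c (ws @ [y, b]) = b * cont c (ws @ [y]) + c * cont c ws"
  by (simp add: cont_def)

lemma cont_determinant:
  fixes c :: "'a::field"
  shows "cont c (a # ys @ [b]) * cont c ys - cont c (ys @ [b]) * cont c (a # ys)
           = - ((- c) ^ (length ys + 1))"
proof (induction ys arbitrary: b rule: rev_induct)
  case Nil
  then show ?case by (simp add: cont_def algebra_simps)
next
  case (snoc y zs)
  have "cont c (a # (zs @ [y]) @ [b]) * cont c (zs @ [y])
          - cont c ((zs @ [y]) @ [b]) * cont c (a # zs @ [y])
        = - c * (cont c (a # zs @ [y]) * cont c zs - cont c (zs @ [y]) * cont c (a # zs))"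
    using cont_snoc_snoc[of c "a # zs" y b] cont_snoc_snoc[of c zs y b]
    by (simp add: algebra_simps)
  also have "\<dots> = - ((- c) ^ (length (zs @ [y]) + 1))"
    using snoc.IH by simp
  finally show ?case .
qed

lemma admissible_consecutive_product:
  assumes "admissible c n x"
  shows "cont c (map x [i..i + int n]) * cont c (map x [i + 1..i + 1 + int n]) = (- c) ^ (n + 1)"
proof -
  define ys where "ys = map x [i + 1..i + int n]"
  define b where "b = x (i + int n + 1)"
  have window: "map x [i..i + int n + 1] = x i # ys @ [b]"
    using upto_rec1[of i "i + int n + 1"] upto_rec2[of "i + 1" "i + int n + 1"]
    by (simp add: ys_def b_def)
  have left: "map x [i..i + int n] = x i # ys"
    using upto_rec1[of i "i + int n"] by (simp add: ys_def)
  have right: "map x [i + 1..i + 1 + int n] = ys @ [b]"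
    using upto_rec2[of "i + 1" "i + int n + 1"] by (simp add: ys_def b_def add_ac)
  have "cont c (x i # ys @ [b]) = 0"
    using assms window unfolding admissible_def by metis
  with cont_determinant[of c "x i" ys b] have "cont c (ys @ [b]) * cont c (x i # ys) = (- c) ^ (n + 1)"
    by (simp add: ys_def del: power_Suc)
  then show ?thesis
    using left right by (simp add: mult.commute)
qed

lemma shift_two_eq_if_consecutive_product_const:
  fixes g :: "int \<Rightarrow> 'a::field"
  assumes "\<And>i. g i * g (i + 1) = d" and "d \<noteq> 0"
  shows "g (i + 2) = g i"
proof -
  have "g i * g (i + 1) = g (i + 2) * g (i + 1)"
    using assms(1)[of i] assms(1)[of "i + 1"] by (simp add: add.assoc mult.commute)
  moreover have "g (i + 1) \<noteq> 0"
    using assms by (metis mult_zero_left)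
  ultimately show ?thesis by simp
qed

lemma period_two_iterate:
  fixes g :: "int \<Rightarrow> 'a"
  assumes "\<And>i. g (i + 2) = g i"
  shows "g (i + 2 * k) = g i"
proof (induction k rule: int_induct[where k = 0])
  case (step1 k)
  then show ?case using assms[of "i + 2 * k"] by (simp add: algebra_simps)
next
  case (step2 k)
  then show ?case using assms[of "i + 2 * (k - 1)"] by (simp add: algebra_simps)
qed simp

lemma is_frieze_last_row:
  assumes "admissible c n x" and "\<forall>(i, j) \<in> strip n. f (i, j) = contw c x i j"
  shows "f (i, i + int n) = cont c (map x [i..i + int n])"
proof -
  have "(i, i + int n) \<in> strip n" by (simp add: strip_def)
  then show ?thesis using assms(2) by (auto simp: contw_def)
qed

theorem mainTheorem8:
  fixes c :: "'a::field" and n :: nat and f :: "int \<times> int \<Rightarrow> 'a"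
  assumes "c \<noteq> 0" and "n \<ge> 1" and "is_frieze c n f"
  shows "\<exists>s t. (\<forall>i::int. f (2*i, 2*i + int n) = s \<and> f (2*i + 1, 2*i + int n + 1) = t)
               \<and> s * t = (- c) ^ (n + 1)"
proof -
  obtain x where adm: "admissible c n x" and fx: "\<forall>(i, j) \<in> strip n. f (i, j) = contw c x i j"
    using assms(3) unfolding is_frieze_def by blast
  define g where "g i = f (i, i + int n)" for i
  have prod: "g i * g (i + 1) = (- c) ^ (n + 1)" for i
    using admissible_consecutive_product[OF adm, of i]
      is_frieze_last_row[OF adm fx, of i] is_frieze_last_row[OF adm fx, of "i + 1"]
    by (simp add: g_def add_ac)
  have "g (i + 2) = g i" for i
    using shift_two_eq_if_consecutive_product_const[where g = g, OF prod] assms(1) by simp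
  then have per: "g (i + 2 * k) = g i" for i k
    by (rule period_two_iterate)
  show ?thesis
  proof (intro exI conjI allI)
    fix i :: int
    show "f (2*i, 2*i + int n) = g 0" using per[of 0 i] by (simp add: g_def)
    show "f (2*i + 1, 2*i + int n + 1) = g 1" using per[of 1 i] by (simp add: g_def add_ac)
  qed (use prod[of 0] in simp)
qed

end
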